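(* Suppose the system is IFS$_m$, with a controller $\Psi:\mathcal{H}_-\to\mathbb{R}^m$ such that $\|\phi(k,\sigma,x_0,\Psi)\|\le C\gamma^k\|x_0\|$ for all $x_0\in\mathbb{R}^n,\sigma\in\Sigma^\omega,k\in\mathbb{N}$, with $C>1$, $\gamma\in[0,1)$. Then there exist a norm $V$ on $\mathbb{R}^n$ satisfying $\|x\|\le V(x)\le\frac{C}{1-\gamma}\|x\|$ for all $x$, and a static feedback $\Phi:\mathbb{R}^n\to\mathbb{R}^m$ that is homogeneous of degree 1 (i.e. $\Phi(\lambda x)=\lambda\Phi(x)$ for all $\lambda\in\mathbb{R}$, $x\in\mathbb{R}^n$) such that $$V(A_ix+B_i\Phi(x))\le\Big(1-\frac{1-\gamma}{C}\Big)V(x)\quad\text{for all }i\in\Sigma,\ x\in\mathbb{R}^n.$$ Consequently the closed loop $x(k+1)=A_{\sigma(k)}x(k)+B_{\sigma(k)}\Phi(x(k))$ is uniformly exponentially stable.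
   Context: Let $\Sigma$ be a finite nonempty set and $\{(A_i,B_i)\in\mathbb{R}^{n\times n}\times\mathbb{R}^{n\times m} : i\in\Sigma\}$. Consider $x(k+1)=A_{\sigma(k)}x(k)+B_{\sigma(k)}u(k)$, $k\in\mathbb{N}=\{0,1,\dots\}$, with arbitrary switching signal $\sigma:\mathbb{N}\to\Sigma$ (set of all such: $\Sigma^\omega$). $\|\cdot\|$ is the Euclidean norm. $\mathcal{H}_-$ is the set of all tuples $(x_k,\dots,x_0;\,i_{k-1},\dots,i_0)$ with $k\in\mathbb{N}$, $x_j\in\mathbb{R}^n$, $i_j\in\Sigma$ (mode string empty when $k=0$). For a function $\Psi:\mathcal{H}_-\to\mathbb{R}^m$ (a current-mode-independent controller with memory), $\phi(k,\sigma,x_0,\Psi)$ denotes the closed-loop trajectory defined by $x(0)=x_0$ and $x(k+1)=A_{\sigma(k)}x(k)+B_{\sigma(k)}\Psi(x(k),\dots,x(0);\,\sigma(k-1),\dots,\sigma(0))$. The system is IFS$_m$ if there exists such $\Psi$ with constants $M>0,\gamma\in[0,1)$ such that $\|\phi(k,\sigma,x_0,\Psi)\|\le M\gamma^k\|x_0\|$ for all $x_0,\sigma,k$. A closed loop is uniformly exponentially stable if there exist $M>0,\gamma\in[0,1)$ with $\|x(k)\|\le M\gamma^k\|x(0)\|$ for all initial states, all $\sigma\in\Sigma^\omega$ and all $k\in\mathbb{N}$. *)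

theory Defs
  imports "HOL-Analysis.Analysis"
begin

text \<open>The mode set Sigma is the finite (nonempty) type 'i; switching signals are
  arbitrary functions nat => 'i.  A history (x_k,...,x_0; i_(k-1),...,i_0) is
  a pair of lists [x_k,...,x_0] and [i_(k-1),...,i_0].\<close>

fun cl_hist ::
  "('i \<Rightarrow> real^'n^'n) \<Rightarrow> ('i \<Rightarrow> real^'m^'n) \<Rightarrow>
   ((real^'n) list \<Rightarrow> 'i list \<Rightarrow> real^'m) \<Rightarrow> (nat \<Rightarrow> 'i) \<Rightarrow> real^'n \<Rightarrow> nat \<Rightarrow> (real^'n) list"
where
  "cl_hist A B Psi \<sigma> x0 0 = [x0]"
| "cl_hist A B Psi \<sigma> x0 (Suc k) =
     (let h = cl_hist A B Psi \<sigma> x0 k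
      in (A (\<sigma> k) *v hd h + B (\<sigma> k) *v Psi h (rev (map \<sigma> [0..<k]))) # h)"

definition phi ::
  "('i \<Rightarrow> real^'n^'n) \<Rightarrow> ('i \<Rightarrow> real^'m^'n) \<Rightarrow>
   nat \<Rightarrow> (nat \<Rightarrow> 'i) \<Rightarrow> real^'n \<Rightarrow> ((real^'n) list \<Rightarrow> 'i list \<Rightarrow> real^'m) \<Rightarrow> real^'n"
where
  "phi A B k \<sigma> x0 Psi = hd (cl_hist A B Psi \<sigma> x0 k)"

fun static_traj ::
  "('i \<Rightarrow> real^'n^'n) \<Rightarrow> ('i \<Rightarrow> real^'m^'n) \<Rightarrow>
   (real^'n \<Rightarrow> real^'m) \<Rightarrow> (nat \<Rightarrow> 'i) \<Rightarrow> real^'n \<Rightarrow> nat \<Rightarrow> real^'n"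
where
  "static_traj A B Phi \<sigma> x0 0 = x0"
| "static_traj A B Phi \<sigma> x0 (Suc k) =
     (let x = static_traj A B Phi \<sigma> x0 k in A (\<sigma> k) *v x + B (\<sigma> k) *v Phi x)"

definition is_norm :: "(real^'n \<Rightarrow> real) \<Rightarrow> bool" where
  "is_norm V \<longleftrightarrow> (\<forall>x. V x \<ge> 0) \<and> (\<forall>x. V x = 0 \<longleftrightarrow> x = 0) \<and>
     (\<forall>c x. V (c *\<^sub>R x) = \<bar>c\<bar> * V x) \<and> (\<forall>x y. V (x + y) \<le> V x + V y)"

end

theory Submission
  imports Defs
begin

(* Once the initial state is fixed, the memory controller Psi is just a policy: a map from the
   past modes to the next input.  Let V x be the least worst-case l1 cost sum_k norm (x k) that a
   policy can guarantee from x.  Policies can be scaled and added because the dynamics are linear,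
   so V is a norm, and V x >= norm x.  Psi itself gives V x <= (1 + C gamma / (1 - gamma)) norm x,
   which is strictly below C / (1 - gamma) norm x when C > 1 (the k = 0 term of the bound is
   norm x, not C norm x).  A nearly optimal policy from x pays norm x in its first step and then
   guarantees about V x - norm x from the next state, whatever the mode; taking its first input
   as Phi x and absorbing the error into the strict slack gives
   V (A i x + B i Phi x) <= (1 - (1 - gamma) / C) V x.  Choosing the input at one point of each
   line through the origin and scaling it along the line makes Phi homogeneous. *)

(* The input at time k is u [\<sigma> 0, ..., \<sigma> (k - 1)], the past modes in chronological order. *)
fun policy_traj ::
  "('i \<Rightarrow> real^'n^'n) \<Rightarrow> ('i \<Rightarrow> real^'m^'n) \<Rightarrow> ('i list \<Rightarrow> real^'m) \<Rightarrow> (nat \<Rightarrow> 'i) \<Rightarrow>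
   real^'n \<Rightarrow> nat \<Rightarrow> real^'n"
where
  "policy_traj A B u \<sigma> x 0 = x"
| "policy_traj A B u \<sigma> x (Suc k) =
     A (\<sigma> k) *v policy_traj A B u \<sigma> x k + B (\<sigma> k) *v u (map \<sigma> [0..<k])"

definition cost_le ::
  "('i \<Rightarrow> real^'n^'n) \<Rightarrow> ('i \<Rightarrow> real^'m^'n) \<Rightarrow> real^'n \<Rightarrow> ('i list \<Rightarrow> real^'m) \<Rightarrow> real \<Rightarrow> bool"
where
  "cost_le A B x u c \<longleftrightarrow> (\<forall>\<sigma> N. (\<Sum>k<N. norm (policy_traj A B u \<sigma> x k)) \<le> c)"

definition l1_stabilizable :: "('i \<Rightarrow> real^'n^'n) \<Rightarrow> ('i \<Rightarrow> real^'m^'n) \<Rightarrow> bool" where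
  "l1_stabilizable A B \<longleftrightarrow> (\<forall>x. \<exists>u c. cost_le A B x u c)"

definition opt_cost :: "('i \<Rightarrow> real^'n^'n) \<Rightarrow> ('i \<Rightarrow> real^'m^'n) \<Rightarrow> real^'n \<Rightarrow> real" where
  "opt_cost A B x = Inf {c. \<exists>u. cost_le A B x u c}"

lemma policy_traj_scaleR:
  "policy_traj A B (\<lambda>w. t *\<^sub>R u w) \<sigma> (t *\<^sub>R x) k = t *\<^sub>R policy_traj A B u \<sigma> x k"
  by (induction k) (simp_all add: algebra_simps)

lemma policy_traj_add:
  "policy_traj A B (\<lambda>w. u w + v w) \<sigma> (x + y) k = policy_traj A B u \<sigma> x k + policy_traj A B v \<sigma> y k"
  by (induction k) (simp_all add: algebra_simps)

lemma policy_traj_Cons: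
  "policy_traj A B (\<lambda>w. u (i # w)) \<sigma> (A i *v x + B i *v u []) k = policy_traj A B u (case_nat i \<sigma>) x (Suc k)"
proof (induction k)
  case 0
  then show ?case by simp
next
  case (Suc k)
  have "map (case_nat i \<sigma>) [0..<Suc k] = i # map \<sigma> [0..<k]"
    by (simp only: map_upt_Suc) simp
  with Suc show ?case by simp
qed

lemma norm_le_cost: "cost_le A B x u c \<Longrightarrow> norm x \<le> c"
  unfolding cost_le_def by (drule spec[of _ undefined], drule spec[of _ 1]) simp

lemma cost_le_scaleR:
  assumes "cost_le A B x u c"
  shows "cost_le A B (t *\<^sub>R x) (\<lambda>w. t *\<^sub>R u w) (\<bar>t\<bar> * c)"
  unfolding cost_le_def
proof (intro allI)
  fix \<sigma> N
  have "(\<Sum>k<N. norm (policy_traj A B (\<lambda>w. t *\<^sub>R u w) \<sigma> (t *\<^sub>R x) k))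
      = \<bar>t\<bar> * (\<Sum>k<N. norm (policy_traj A B u \<sigma> x k))"
    by (simp add: policy_traj_scaleR sum_distrib_left)
  also have "\<dots> \<le> \<bar>t\<bar> * c"
    using assms by (simp add: cost_le_def mult_left_mono)
  finally show "(\<Sum>k<N. norm (policy_traj A B (\<lambda>w. t *\<^sub>R u w) \<sigma> (t *\<^sub>R x) k)) \<le> \<bar>t\<bar> * c" .
qed

lemma cost_le_add:
  assumes "cost_le A B x u c" and "cost_le A B y v d"
  shows "cost_le A B (x + y) (\<lambda>w. u w + v w) (c + d)"
  unfolding cost_le_def
proof (intro allI)
  fix \<sigma> N
  have "(\<Sum>k<N. norm (policy_traj A B (\<lambda>w. u w + v w) \<sigma> (x + y) k))
      \<le> (\<Sum>k<N. norm (policy_traj A B u \<sigma> x k)) + (\<Sum>k<N. norm (policy_traj A B v \<sigma> y k))"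
    unfolding sum.distrib[symmetric] by (rule sum_mono) (simp add: policy_traj_add norm_triangle_ineq)
  also have "\<dots> \<le> c + d"
    using assms by (simp add: cost_le_def add_mono)
  finally show "(\<Sum>k<N. norm (policy_traj A B (\<lambda>w. u w + v w) \<sigma> (x + y) k)) \<le> c + d" .
qed

lemma cost_le_step:
  assumes "cost_le A B x u c"
  shows "cost_le A B (A i *v x + B i *v u []) (\<lambda>w. u (i # w)) (c - norm x)"
  unfolding cost_le_def
proof (intro allI)
  fix \<sigma> N
  have "norm x + (\<Sum>k<N. norm (policy_traj A B u (case_nat i \<sigma>) x (Suc k)))
      = (\<Sum>k<Suc N. norm (policy_traj A B u (case_nat i \<sigma>) x k))"
    by (simp only: sum.lessThan_Suc_shift) simp
  also have "\<dots> \<le> c"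
    using assms unfolding cost_le_def by blast
  finally show "(\<Sum>k<N. norm (policy_traj A B (\<lambda>w. u (i # w)) \<sigma> (A i *v x + B i *v u []) k)) \<le> c - norm x"
    by (simp add: policy_traj_Cons)
qed

lemma bdd_below_costs: "bdd_below {c. \<exists>u. cost_le A B x u c}"
  by (rule bdd_belowI[of _ "norm x"]) (auto intro: norm_le_cost)

lemma costs_nonempty: "l1_stabilizable A B \<Longrightarrow> {c. \<exists>u. cost_le A B x u c} \<noteq> {}"
  unfolding l1_stabilizable_def by blast

lemma opt_cost_le: "cost_le A B x u c \<Longrightarrow> opt_cost A B x \<le> c"
  unfolding opt_cost_def by (rule cInf_lower[OF _ bdd_below_costs]) auto

lemma opt_cost_greatest:
  assumes "l1_stabilizable A B" and "\<And>u c. cost_le A B x u c \<Longrightarrow> d \<le> c"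
  shows "d \<le> opt_cost A B x"
  unfolding opt_cost_def by (rule cInf_greatest[OF costs_nonempty[OF assms(1)]]) (use assms(2) in auto)

lemma opt_cost_lessD:
  assumes "l1_stabilizable A B" and "opt_cost A B x < d"
  obtains u c where "cost_le A B x u c" and "c < d"
  using cInf_lessD[OF costs_nonempty[OF assms(1)], of x d] assms(2) unfolding opt_cost_def by auto

lemma norm_le_opt_cost: "l1_stabilizable A B \<Longrightarrow> norm x \<le> opt_cost A B x"
  by (rule opt_cost_greatest) (auto intro: norm_le_cost)

lemma opt_cost_zero:
  assumes "l1_stabilizable A B"
  shows "opt_cost A B 0 = 0"
proof -
  obtain u c where "cost_le A B 0 u c"
    using assms unfolding l1_stabilizable_def by blast
  then have "cost_le A B (0 *\<^sub>R 0) (\<lambda>w. 0 *\<^sub>R u w) (\<bar>0\<bar> * c)"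
    by (rule cost_le_scaleR)
  then have "opt_cost A B 0 \<le> 0"
    using opt_cost_le by fastforce
  with norm_le_opt_cost[OF assms, of 0] show ?thesis by simp
qed

lemma opt_cost_scaleR_le:
  assumes "l1_stabilizable A B" and "t \<noteq> 0"
  shows "opt_cost A B (t *\<^sub>R x) \<le> \<bar>t\<bar> * opt_cost A B x"
proof -
  have "opt_cost A B (t *\<^sub>R x) / \<bar>t\<bar> \<le> opt_cost A B x"
  proof (rule opt_cost_greatest[OF assms(1)])
    fix u c
    assume "cost_le A B x u c"
    then have "opt_cost A B (t *\<^sub>R x) \<le> \<bar>t\<bar> * c"
      by (rule opt_cost_le[OF cost_le_scaleR])
    with assms(2) show "opt_cost A B (t *\<^sub>R x) / \<bar>t\<bar> \<le> c"
      by (simp add: divide_le_eq mult.commute)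
  qed
  with assms(2) show ?thesis by (simp add: divide_le_eq mult.commute)
qed

lemma opt_cost_scaleR:
  assumes "l1_stabilizable A B"
  shows "opt_cost A B (t *\<^sub>R x) = \<bar>t\<bar> * opt_cost A B x"
proof (cases "t = 0")
  case True
  then show ?thesis using opt_cost_zero[OF assms] by simp
next
  case False
  have "opt_cost A B x = opt_cost A B (inverse t *\<^sub>R t *\<^sub>R x)"
    using False by simp
  also have "\<dots> \<le> \<bar>inverse t\<bar> * opt_cost A B (t *\<^sub>R x)"
    using False by (intro opt_cost_scaleR_le[OF assms]) simp
  finally have "\<bar>t\<bar> * opt_cost A B x \<le> opt_cost A B (t *\<^sub>R x)"
    using False by (simp add: abs_inverse field_simps)
  with opt_cost_scaleR_le[OF assms False, of x] show ?thesis by simp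
qed

lemma opt_cost_triangle:
  assumes "l1_stabilizable A B"
  shows "opt_cost A B (x + y) \<le> opt_cost A B x + opt_cost A B y"
proof -
  have "opt_cost A B (x + y) - opt_cost A B x \<le> opt_cost A B y"
  proof (rule opt_cost_greatest[OF assms])
    fix v d
    assume v: "cost_le A B y v d"
    have "opt_cost A B (x + y) - d \<le> opt_cost A B x"
    proof (rule opt_cost_greatest[OF assms])
      fix u c
      assume "cost_le A B x u c"
      then have "opt_cost A B (x + y) \<le> c + d"
        by (rule opt_cost_le[OF cost_le_add[OF _ v]])
      then show "opt_cost A B (x + y) - d \<le> c" by simp
    qed
    then show "opt_cost A B (x + y) - opt_cost A B x \<le> d" by simp
  qed
  then show ?thesis by simp
qed

lemma is_norm_opt_cost:
  assumes "l1_stabilizable A B"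
  shows "is_norm (opt_cost A B)"
  unfolding is_norm_def
proof (intro conjI allI)
  fix x
  show "0 \<le> opt_cost A B x"
    using norm_le_opt_cost[OF assms, of x] norm_ge_zero[of x] by linarith
  show "opt_cost A B x = 0 \<longleftrightarrow> x = 0"
    using norm_le_opt_cost[OF assms, of x] opt_cost_zero[OF assms] by auto
qed (simp_all add: opt_cost_scaleR[OF assms] opt_cost_triangle[OF assms])

lemma opt_cost_step:
  assumes "l1_stabilizable A B" and "0 < \<epsilon>"
  shows "\<exists>y. \<forall>i. opt_cost A B (A i *v x + B i *v y) \<le> opt_cost A B x - norm x + \<epsilon>"
proof -
  obtain u c where u: "cost_le A B x u c" and c: "c < opt_cost A B x + \<epsilon>"
    using opt_cost_lessD[OF assms(1)] assms(2) by (metis less_add_same_cancel1)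
  have "opt_cost A B (A i *v x + B i *v u []) \<le> opt_cost A B x - norm x + \<epsilon>" for i
    using opt_cost_le[OF cost_le_step[OF u, of i]] c by linarith
  then show ?thesis by blast
qed

lemma homogeneous_selection:
  fixes P :: "'a::real_vector \<Rightarrow> 'b::real_vector \<Rightarrow> bool"
  assumes ex: "\<And>x. x \<noteq> 0 \<Longrightarrow> \<exists>y. P x y"
    and scale: "\<And>c x y. c \<noteq> 0 \<Longrightarrow> P x y \<Longrightarrow> P (c *\<^sub>R x) (c *\<^sub>R y)"
  shows "\<exists>f. (\<forall>c x. f (c *\<^sub>R x) = c *\<^sub>R f x) \<and> (\<forall>x. x \<noteq> 0 \<longrightarrow> P x (f x))"
proof -
  define rep where "rep x = (SOME y. y \<noteq> 0 \<and> y \<in> range (\<lambda>t. t *\<^sub>R x))" for x :: 'a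
  define coord where "coord x = (SOME t. x = t *\<^sub>R rep x)" for x
  define f where "f x = (if x = 0 then 0 else coord x *\<^sub>R (SOME y. P (rep x) y))" for x
  have "range (\<lambda>t. t *\<^sub>R (c *\<^sub>R x)) = range (\<lambda>t. t *\<^sub>R x)" if "c \<noteq> 0" for c and x :: 'a
  proof (intro equalityI subsetI)
    fix y
    assume "y \<in> range (\<lambda>t. t *\<^sub>R x)"
    then obtain t where "y = t *\<^sub>R x" by blast
    with that have "y = (t / c) *\<^sub>R (c *\<^sub>R x)" by simp
    then show "y \<in> range (\<lambda>t. t *\<^sub>R (c *\<^sub>R x))" by blast
  qed auto
  then have rep_scaleR: "rep (c *\<^sub>R x) = rep x" if "c \<noteq> 0" for c x
    using that unfolding rep_def by simp
  have rep: "rep x \<noteq> 0 \<and> rep x \<in> range (\<lambda>t. t *\<^sub>R x)" if "x \<noteq> 0" for x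
    unfolding rep_def by (rule someI[of _ x]) (use that in \<open>auto intro: range_eqI[of _ _ 1]\<close>)
  have coord: "x = coord x *\<^sub>R rep x" "coord x \<noteq> 0" if x: "x \<noteq> 0" for x
  proof -
    obtain t where "rep x = t *\<^sub>R x" "t \<noteq> 0"
      using rep[OF x] by auto
    then have "x = (1 / t) *\<^sub>R rep x" by simp
    then show "x = coord x *\<^sub>R rep x"
      unfolding coord_def by (rule someI)
    with x show "coord x \<noteq> 0" by auto
  qed
  have coord_scaleR: "coord (c *\<^sub>R x) = c * coord x" if "c \<noteq> 0" "x \<noteq> 0" for c x
  proof -
    have "coord (c *\<^sub>R x) *\<^sub>R rep x = (c * coord x) *\<^sub>R rep x"
      using coord(1)[of "c *\<^sub>R x"] coord(1)[OF that(2)] that rep_scaleR[OF that(1)]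
      by (metis scaleR_eq_0_iff scaleR_scaleR)
    with rep[OF that(2)] show ?thesis by simp
  qed
  have "f (c *\<^sub>R x) = c *\<^sub>R f x" for c x
    by (cases "c = 0 \<or> x = 0") (auto simp: f_def coord_scaleR rep_scaleR)
  moreover have "P x (f x)" if "x \<noteq> 0" for x
  proof -
    have "P (rep x) (SOME y. P (rep x) y)"
      using ex rep[OF that] by (blast intro: someI_ex)
    then have "P (coord x *\<^sub>R rep x) (coord x *\<^sub>R (SOME y. P (rep x) y))"
      by (rule scale[OF coord(2)[OF that]])
    with that coord(1)[OF that] show ?thesis
      unfolding f_def by simp
  qed
  ultimately show ?thesis by blast
qed

lemma opt_cost_contraction_step:
  assumes stab: "l1_stabilizable A B" and less: "opt_cost A B x < K * norm x"
  shows "\<exists>y. \<forall>i. opt_cost A B (A i *v x + B i *v y) \<le> (1 - 1 / K) * opt_cost A B x"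
proof -
  let ?V = "opt_cost A B"
  have "norm x < K * norm x"
    using norm_le_opt_cost[OF stab, of x] less by linarith
  then have "0 < norm x" and "1 < K"
    using mult_right_less_imp_less[of 1 "norm x" K] by (auto simp: le_less)
  with less have "0 < norm x - ?V x / K"
    by (simp add: pos_divide_less_eq mult.commute)
  with opt_cost_step[OF stab] obtain y
    where "\<forall>i. ?V (A i *v x + B i *v y) \<le> ?V x - norm x + (norm x - ?V x / K)"
    by blast
  then show ?thesis
    by (intro exI[of _ y]) (simp add: algebra_simps)
qed

lemma opt_cost_contractive_feedback:
  assumes stab: "l1_stabilizable A B"
    and less: "\<And>x. x \<noteq> 0 \<Longrightarrow> opt_cost A B x < K * norm x"
  shows "\<exists>Phi. (\<forall>c x. Phi (c *\<^sub>R x) = c *\<^sub>R Phi x)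
           \<and> (\<forall>i x. opt_cost A B (A i *v x + B i *v Phi x) \<le> (1 - 1 / K) * opt_cost A B x)"
proof -
  let ?V = "opt_cost A B"
  define P where "P x y \<longleftrightarrow> (\<forall>i. ?V (A i *v x + B i *v y) \<le> (1 - 1 / K) * ?V x)" for x y
  have "P (c *\<^sub>R x) (c *\<^sub>R y)" if "P x y" for c x y
    unfolding P_def
  proof
    fix i
    have "?V (A i *v (c *\<^sub>R x) + B i *v (c *\<^sub>R y)) = \<bar>c\<bar> * ?V (A i *v x + B i *v y)"
      by (simp add: matrix_vector_mult_scaleR opt_cost_scaleR[OF stab] flip: scaleR_right_distrib)
    also have "\<dots> \<le> \<bar>c\<bar> * ((1 - 1 / K) * ?V x)"
      using that unfolding P_def by (simp add: mult_left_mono)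
    also have "\<dots> = (1 - 1 / K) * ?V (c *\<^sub>R x)"
      by (simp add: opt_cost_scaleR[OF stab])
    finally show "?V (A i *v (c *\<^sub>R x) + B i *v (c *\<^sub>R y)) \<le> (1 - 1 / K) * ?V (c *\<^sub>R x)" .
  qed
  with opt_cost_contraction_step[OF stab less] obtain Phi
    where hom: "\<forall>c x. Phi (c *\<^sub>R x) = c *\<^sub>R Phi x" and nonzero: "\<forall>x. x \<noteq> 0 \<longrightarrow> P x (Phi x)"
    using homogeneous_selection[of P] unfolding P_def by blast
  have "Phi 0 = 0"
    using hom[rule_format, of 0 0] by simp
  then have "P x (Phi x)" for x
    using nonzero by (cases "x = 0") (simp_all add: P_def opt_cost_zero[OF stab])
  with hom show ?thesis
    unfolding P_def by blast
qed

lemma static_traj_exp_stable: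
  assumes lower: "\<And>x. norm x \<le> V x" and upper: "\<And>x. V x \<le> K * norm x"
    and "0 \<le> \<rho>" and decrease: "\<And>i x. V (A i *v x + B i *v Phi x) \<le> \<rho> * V x"
  shows "norm (static_traj A B Phi \<sigma> x0 k) \<le> K * \<rho> ^ k * norm x0"
proof -
  have contract: "V (static_traj A B Phi \<sigma> x0 k) \<le> \<rho> ^ k * V x0" for k
  proof (induction k)
    case 0
    then show ?case by simp
  next
    case (Suc k)
    have "V (static_traj A B Phi \<sigma> x0 (Suc k)) \<le> \<rho> * V (static_traj A B Phi \<sigma> x0 k)"
      by (simp add: Let_def decrease)
    also have "\<dots> \<le> \<rho> * (\<rho> ^ k * V x0)"
      using Suc \<open>0 \<le> \<rho>\<close> by (simp add: mult_left_mono)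
    finally show ?case by simp
  qed
  have "norm (static_traj A B Phi \<sigma> x0 k) \<le> V (static_traj A B Phi \<sigma> x0 k)"
    by (rule lower)
  also have "\<dots> \<le> \<rho> ^ k * V x0"
    by (rule contract)
  also have "\<dots> \<le> \<rho> ^ k * (K * norm x0)"
    using upper \<open>0 \<le> \<rho>\<close> by (simp add: mult_left_mono)
  finally show ?thesis by (simp add: mult_ac)
qed

lemma cl_hist_cong:
  "(\<And>j. j < k \<Longrightarrow> \<sigma> j = \<sigma>' j) \<Longrightarrow> cl_hist A B Psi \<sigma> x0 k = cl_hist A B Psi \<sigma>' x0 k"
proof (induction k)
  case 0
  then show ?case by simp
next
  case (Suc k)
  then have "cl_hist A B Psi \<sigma> x0 k = cl_hist A B Psi \<sigma>' x0 k"
    and "map \<sigma> [0..<k] = map \<sigma>' [0..<k]" and "\<sigma> k = \<sigma>' k"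
    by simp_all
  then show ?case by (simp only: cl_hist.simps Let_def)
qed

(* Replaying the closed loop along the modes w reconstructs the states Psi has seen. *)
definition memory_policy ::
  "('i \<Rightarrow> real^'n^'n) \<Rightarrow> ('i \<Rightarrow> real^'m^'n) \<Rightarrow> ((real^'n) list \<Rightarrow> 'i list \<Rightarrow> real^'m) \<Rightarrow>
   real^'n \<Rightarrow> 'i list \<Rightarrow> real^'m"
where
  "memory_policy A B Psi x0 w = Psi (cl_hist A B Psi (\<lambda>j. w ! j) x0 (length w)) (rev w)"

lemma policy_traj_memory_policy:
  "policy_traj A B (memory_policy A B Psi x0) \<sigma> x0 k = phi A B k \<sigma> x0 Psi"
proof (induction k)
  case 0
  then show ?case by (simp add: phi_def)
next
  case (Suc k)
  have "cl_hist A B Psi (\<lambda>j. map \<sigma> [0..<k] ! j) x0 k = cl_hist A B Psi \<sigma> x0 k"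
    by (rule cl_hist_cong) simp
  with Suc show ?case by (simp add: phi_def memory_policy_def Let_def)
qed

lemma sum_le_geometric_tail:
  fixes f :: "nat \<Rightarrow> real"
  assumes "0 \<le> f 0" "0 \<le> c" "0 \<le> \<gamma>" "\<gamma> < 1" and tail: "\<And>k. f (Suc k) \<le> c * \<gamma> ^ Suc k"
  shows "(\<Sum>k<N. f k) \<le> f 0 + c * \<gamma> / (1 - \<gamma>)"
proof (cases N)
  case 0
  with assms show ?thesis by simp
next
  case (Suc M)
  have "(\<Sum>k<N. f k) = f 0 + (\<Sum>k<M. f (Suc k))"
    using Suc by (simp only: sum.lessThan_Suc_shift)
  also have "\<dots> \<le> f 0 + c * \<gamma> * (\<Sum>k<M. \<gamma> ^ k)"
    using tail by (simp add: sum_distrib_left sum_mono mult_ac)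
  also have "\<dots> \<le> f 0 + c * \<gamma> * (1 / (1 - \<gamma>))"
    using assms by (intro add_left_mono mult_left_mono) (simp_all add: sum_gp_strict divide_right_mono)
  finally show ?thesis by simp
qed

lemma cost_le_memory_policy:
  assumes "0 \<le> C" "0 \<le> \<gamma>" "\<gamma> < 1"
    and bound: "\<And>k \<sigma>. norm (phi A B k \<sigma> x0 Psi) \<le> C * \<gamma> ^ k * norm x0"
  shows "cost_le A B x0 (memory_policy A B Psi x0) ((1 + C * \<gamma> / (1 - \<gamma>)) * norm x0)"
  unfolding cost_le_def policy_traj_memory_policy
proof (intro allI)
  fix \<sigma> N
  have "(\<Sum>k<N. norm (phi A B k \<sigma> x0 Psi)) \<le> norm (phi A B 0 \<sigma> x0 Psi) + C * norm x0 * \<gamma> / (1 - \<gamma>)"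
  proof (rule sum_le_geometric_tail)
    fix k
    show "norm (phi A B (Suc k) \<sigma> x0 Psi) \<le> C * norm x0 * \<gamma> ^ Suc k"
      using bound[of "Suc k" \<sigma>] by (simp only: mult_ac)
  qed (use assms in simp_all)
  moreover have "phi A B 0 \<sigma> x0 Psi = x0"
    by (simp add: phi_def)
  ultimately show "(\<Sum>k<N. norm (phi A B k \<sigma> x0 Psi)) \<le> (1 + C * \<gamma> / (1 - \<gamma>)) * norm x0"
    by (simp add: algebra_simps)
qed

theorem mainTheorem5:
  fixes A :: "'i::finite \<Rightarrow> real^'n^'n"
    and B :: "'i \<Rightarrow> real^'m^'n"
    and Psi :: "(real^'n) list \<Rightarrow> 'i list \<Rightarrow> real^'m"
    and C \<gamma> :: real
  assumes "C > 1" and "0 \<le> \<gamma>" and "\<gamma> < 1"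
    and bound: "\<And>x0 \<sigma> k. norm (phi A B k \<sigma> x0 Psi) \<le> C * \<gamma> ^ k * norm x0"
  shows "\<exists>V Phi. is_norm V
          \<and> (\<forall>x. norm x \<le> V x \<and> V x \<le> C / (1 - \<gamma>) * norm x)
          \<and> (\<forall>c x. Phi (c *\<^sub>R x) = c *\<^sub>R Phi x)
          \<and> (\<forall>i x. V (A i *v x + B i *v Phi x) \<le> (1 - (1 - \<gamma>) / C) * V x)
          \<and> (\<exists>M \<gamma>'. M > 0 \<and> 0 \<le> \<gamma>' \<and> \<gamma>' < 1 \<and>
               (\<forall>x0 \<sigma> k. norm (static_traj A B Phi \<sigma> x0 k) \<le> M * \<gamma>' ^ k * norm x0))"
proof -
  let ?K = "C / (1 - \<gamma>)" and ?V = "opt_cost A B"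
  have "cost_le A B x (memory_policy A B Psi x) ((1 + C * \<gamma> / (1 - \<gamma>)) * norm x)" for x
    using assms by (intro cost_le_memory_policy) auto
  then have stab: "l1_stabilizable A B"
    and upper: "?V x \<le> (1 + C * \<gamma> / (1 - \<gamma>)) * norm x" for x
    unfolding l1_stabilizable_def by (blast, rule opt_cost_le)
  have "?K - (1 + C * \<gamma> / (1 - \<gamma>)) = C - 1"
    using \<open>\<gamma> < 1\<close> by (simp add: diff_divide_distrib[symmetric] add_divide_distrib[symmetric] field_simps)
  then have "1 + C * \<gamma> / (1 - \<gamma>) < ?K"
    using \<open>C > 1\<close> by linarith
  then have less: "?V x < ?K * norm x" if "x \<noteq> 0" for x
    using upper[of x] mult_strict_right_mono[of _ ?K "norm x"] that by fastforce
  then have upper': "?V x \<le> ?K * norm x" for x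
    by (cases "x = 0") (simp_all add: opt_cost_zero[OF stab] less_imp_le)
  obtain Phi where hom: "\<forall>c x. Phi (c *\<^sub>R x) = c *\<^sub>R Phi x"
    and decrease: "\<forall>i x. ?V (A i *v x + B i *v Phi x) \<le> (1 - 1 / ?K) * ?V x"
    using opt_cost_contractive_feedback[OF stab less] by blast
  have rate: "1 - 1 / ?K = 1 - (1 - \<gamma>) / C" "0 \<le> 1 - 1 / ?K" "1 - 1 / ?K < 1" "0 < ?K"
    using assms by (simp_all add: field_simps)
  have "norm (static_traj A B Phi \<sigma> x0 k) \<le> ?K * (1 - 1 / ?K) ^ k * norm x0" for \<sigma> x0 k
    using decrease by (intro static_traj_exp_stable[OF norm_le_opt_cost[OF stab] upper' rate(2)]) blast
  with is_norm_opt_cost[OF stab] norm_le_opt_cost[OF stab] upper' hom decrease rate show ?thesis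
    by (intro exI[of _ ?V] exI[of _ Phi] conjI exI[of _ ?K] exI[of _ "1 - 1 / ?K"]) simp_all
qed

end
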